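(* Let $n \ge 4$, let $\lambda = (\lambda_1,\lambda_2)$ with integers $\lambda_1 \ge \lambda_2 \ge 0$, and let $(\lambda, i, j, k)$ be an admissible tuple. Then the function $\psi_{\lambda,(i,j,k)} \colon \mathcal{I}_2 \to V$ is $\mathrm{O}(n)$-equivariant, i.e. $\psi_{\lambda,(i,j,k)}(gJ) = \pi(g)\psi_{\lambda,(i,j,k)}(J)$ for all $g \in \mathrm{O}(n)$ and $J \in \mathcal{I}_2$.
   Context: Setting. Fix an angle $\theta$ and consider the graph on $S^{n-1}$ in which distinct $x,y$ are adjacent if $\langle x,y\rangle > \cos\theta$; $\mathcal{I}_2$ is the set of independent sets of this graph of cardinality at most $2$ (including $\emptyset$), and $\mathcal{I}_{=i}$ those of cardinality exactly $i$. $\mathrm{O}(n)$ (real orthogonal $n\times n$ matrices) acts by $g\{x_1,\dots\} = \{gx_1,\dots\}$. $\mathrm{O}(n,\mathbb{C})$ denotes complex $n\times n$ matrices $g$ with $g^{\sf T} g = I$. Representation of $\mathrm{GL}(2)$: let $U = \mathbb{C}^2$ with basis $e_1,e_2$ and tautological action, $m = \lambda_1 - \lambda_2$, $W = \mathrm{Sym}^{\lambda_2}(\wedge^2 U)\otimes \mathrm{Sym}^m(U)$ with the induced action $\rho \colon \mathrm{GL}(2)\to \mathrm{GL}(W)$ (extended polynomially to all $2\times 2$ complex matrices), basis $w_k = (e_1\wedge e_2)^{\lambda_2} e_1^{m-k} e_2^k$, $k = 0,\dots,m$, and inner product making this basis orthonormal. Put $c_1(k) = \lambda_2 + m - k$,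 $c_2(k) = \lambda_2 + k$. Induced representation of $\mathrm{O}(n)$: let $\omega = (I_2 \ \ iI_2 \ \ 0)$ (a $2\times n$ complex matrix) and $\epsilon = \binom{I_2}{0}$ (an $n \times 2$ matrix). For $w \in W$ define $f_w \colon \mathrm{O}(n,\mathbb{C}) \to W$, $f_w(\gamma) = \rho(\omega\gamma\epsilon)w$, and let $V = \mathrm{span}\{R_g f_w : g \in \mathrm{O}(n,\mathbb{C}), w\in W\}$ where $(R_g f)(\gamma) = f(\gamma g)$; $\pi$ is the representation of $\mathrm{O}(n)$ on $V$ by right translation, with inner product $\langle f_1,f_2\rangle = \int_{\mathrm{O}(n)} \langle f_1(\gamma), f_2(\gamma)\rangle\, d\gamma$ (normalized Haar measure). Let $\Psi(w) = f_w$. Orbit representatives and section: for $J\in\mathcal{I}_2$ with $|J|\ge 1$ write $J = \{x,y\}$ (with $x=y$ if $|J|=1$) and put $p_j(J) = \langle x,y\rangle^j$, $q_1(J) = \sqrt{2+2\langle x,y\rangle}$, $q_2(J) = \sqrt{2 - 2\langle x,y\rangle}$; the representative of the orbit $\mathrm{O}(n)J$ is $R_J = \{(q_1(J)/2, q_2(J)/2, 0,\dots,0), (q_1(J)/2, -q_2(J)/2,0,\dots,0)\}$ (so $e_1$ for singletons), and of $\mathcal{I}_{=0}$ is $\emptyset$. A section is a map $s \colon \mathcal{I}_2 \to \mathrm{O}(n)$ with $s(J)R_J = J$. Admissible tuples $(\lambda,i,j,k)$: for $i=0$: $\lambda = (0,0)$, $j=k=0$; for $i=1$: $\lambda_2 =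 0$, $j = k = 0$; for $i = 2$: any $\lambda$, $j\ge 0$, $0\le k\le \lambda_1-\lambda_2$ with $\lambda_2 + k$ even. Equivariant functions: $\psi_{\lambda,(i,j,k)}(J) = \xi_{\lambda,i,j,k}(J)\,\pi(s(J))\Psi(w_k)$, where $\xi_{\lambda,i,j,k}(J) = 1$ if $i = |J| < 2$, $\xi_{\lambda,i,j,k}(J) = p_j(J) q_1(J)^{c_1(k)} q_2(J)^{c_2(k)}$ if $i = |J| = 2$, and $0$ otherwise (with $0^0 = 1$). *)

theory Defs
  imports "Jordan_Normal_Form.Determinant" "HOL-Computational_Algebra.Polynomial"
begin

definition sphere_n :: "nat \<Rightarrow> real vec set" where
  "sphere_n n = {x. dim_vec x = n \<and> x \<bullet> x = 1}"

(* independent sets of cardinality at most 2 of the graph with edges <x,y> > cos theta *)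
definition I2 :: "nat \<Rightarrow> real \<Rightarrow> real vec set set" where
  "I2 n \<theta> = {J. J \<subseteq> sphere_n n \<and> finite J \<and> card J \<le> 2 \<and>
       (\<forall>x\<in>J. \<forall>y\<in>J. x \<noteq> y \<longrightarrow> \<not> (x \<bullet> y > cos \<theta>))}"

definition orth :: "nat \<Rightarrow> real mat set" where
  "orth n = {g \<in> carrier_mat n n. transpose_mat g * g = 1\<^sub>m n}"

definition orthC :: "nat \<Rightarrow> complex mat set" where
  "orthC n = {g \<in> carrier_mat n n. transpose_mat g * g = 1\<^sub>m n}"

definition act :: "real mat \<Rightarrow> real vec set \<Rightarrow> real vec set" where
  "act g J = (\<lambda>x. g *\<^sub>v x) ` J"

(* <x,y> for J = {x,y} (x = y if |J| = 1) *)
definition ipJ :: "real vec set \<Rightarrow> real" where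
  "ipJ J = (SOME t. \<exists>x\<in>J. \<exists>y\<in>J. (card J \<ge> 2 \<longrightarrow> x \<noteq> y) \<and> t = x \<bullet> y)"

definition pJ :: "nat \<Rightarrow> real vec set \<Rightarrow> real" where
  "pJ j J = ipJ J ^ j"

definition q1 :: "real vec set \<Rightarrow> real" where
  "q1 J = sqrt (2 + 2 * ipJ J)"

definition q2 :: "real vec set \<Rightarrow> real" where
  "q2 J = sqrt (2 - 2 * ipJ J)"

definition repr :: "nat \<Rightarrow> real vec set \<Rightarrow> real vec set" where
  "repr n J = (if J = {} then {} else
     {vec n (\<lambda>i. if i = 0 then q1 J / 2 else if i = 1 then q2 J / 2 else 0),
      vec n (\<lambda>i. if i = 0 then q1 J / 2 else if i = 1 then - q2 J / 2 else 0)})"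

definition is_section :: "nat \<Rightarrow> real \<Rightarrow> (real vec set \<Rightarrow> real mat) \<Rightarrow> bool" where
  "is_section n \<theta> s \<longleftrightarrow> (\<forall>J\<in>I2 n \<theta>. s J \<in> orth n \<and> act (s J) (repr n J) = J)"

(* W = Sym^{l2}(wedge^2 U) (x) Sym^m(U), m = l1 - l2, identified with C^{m+1} via the
   basis w_k = (e1/\e2)^{l2} e1^{m-k} e2^k.  Sym^m(U) is identified with polynomials in t
   of degree <= m via e1^{m-k} e2^k |-> t^k.  rho(M) w_k = det(M)^{l2} (M e1)^{m-k} (M e2)^k. *)
definition rho :: "nat \<Rightarrow> nat \<Rightarrow> complex mat \<Rightarrow> complex vec \<Rightarrow> complex vec" where
  "rho l1 l2 M w = vec (l1 - l2 + 1) (\<lambda>l. det M ^ l2 *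
     (\<Sum>k\<le>l1 - l2. w $ k *
        coeff ([:M $$ (0,0), M $$ (1,0):] ^ (l1 - l2 - k) * [:M $$ (0,1), M $$ (1,1):] ^ k) l))"

definition wbasis :: "nat \<Rightarrow> nat \<Rightarrow> nat \<Rightarrow> complex vec" where
  "wbasis l1 l2 k = unit_vec (l1 - l2 + 1) k"

definition omega :: "nat \<Rightarrow> complex mat" where
  "omega n = mat 2 n (\<lambda>(i,j). if j = i then 1 else if j = i + 2 then \<i> else 0)"

definition epsilon :: "nat \<Rightarrow> complex mat" where
  "epsilon n = mat n 2 (\<lambda>(i,j). if i = j then 1 else 0)"

definition Psi :: "nat \<Rightarrow> nat \<Rightarrow> nat \<Rightarrow> complex vec \<Rightarrow> complex mat \<Rightarrow> complex vec" where
  "Psi n l1 l2 w = (\<lambda>\<gamma>. rho l1 l2 (omega n * \<gamma> * epsilon n) w)"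

definition piR :: "real mat \<Rightarrow> (complex mat \<Rightarrow> complex vec) \<Rightarrow> (complex mat \<Rightarrow> complex vec)" where
  "piR g f = (\<lambda>\<gamma>. f (\<gamma> * map_mat complex_of_real g))"

definition xi :: "nat \<Rightarrow> nat \<Rightarrow> nat \<Rightarrow> nat \<Rightarrow> nat \<Rightarrow> real vec set \<Rightarrow> real" where
  "xi l1 l2 i j k J =
     (if i = card J \<and> card J < 2 then 1
      else if i = card J \<and> card J = 2 then
        pJ j J * q1 J ^ (l2 + (l1 - l2) - k) * q2 J ^ (l2 + k)
      else 0)"

definition admissible :: "nat \<times> nat \<Rightarrow> nat \<Rightarrow> nat \<Rightarrow> nat \<Rightarrow> bool" where
  "admissible lam i j k \<longleftrightarrow>
     (i = 0 \<and> lam = (0,0) \<and> j = 0 \<and> k = 0) \<or>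
     (i = 1 \<and> snd lam = 0 \<and> j = 0 \<and> k = 0) \<or>
     (i = 2 \<and> k \<le> fst lam - snd lam \<and> even (snd lam + k))"

definition psi :: "nat \<Rightarrow> (real vec set \<Rightarrow> real mat) \<Rightarrow> nat \<times> nat \<Rightarrow> nat \<Rightarrow> nat \<Rightarrow> nat
                   \<Rightarrow> real vec set \<Rightarrow> complex mat \<Rightarrow> complex vec" where
  "psi n s lam i j k J = (\<lambda>\<gamma>. complex_of_real (xi (fst lam) (snd lam) i j k J) \<cdot>\<^sub>v
      piR (s J) (Psi n (fst lam) (snd lam) (wbasis (fst lam) (snd lam) k)) \<gamma>)"

end

(* Put A = g s(J) and B = s(gJ). Both map the representative R_J = {c1 e1 + c2 e2, c1 e1 - c2 e2},
   c1 = q1(J)/2, c2 = q2(J)/2, onto gJ, either pointwise or with the two points swapped; hence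
   c1 B e1 = c1 A e1 and c2 B e2 = sigma c2 A e2 with sigma = 1 or -1.  Now f_w(gamma Y) =
   rho(omega gamma Y epsilon) w only sees the first two columns of Y, and rho(M) w_k is homogeneous
   of degree l1 - k in the first and l2 + k in the second column of M.  So if c1, c2 are nonzero the
   two sides of the claim differ by sigma^(l2 + k), which is 1 by the parity condition of
   admissibility.  If c1 = 0 or c2 = 0 the corresponding column is unconstrained, but then xi
   vanishes unless the degree of rho(M) w_k in that column is zero. *)

theory Submission
  imports Defs "Jordan_Normal_Form.Column_Operations"
begin

lemma mult_mat_vec_unit_vec:
  fixes A :: "'a :: semiring_1 mat"
  assumes "A \<in> carrier_mat m n" and "j < n"
  shows "A *\<^sub>v unit_vec n j = col A j"
  using assms by (intro eq_vecI) auto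

lemma smult_vec_left_cancel:
  fixes v w :: "'a :: field vec"
  assumes "a \<noteq> 0" and "a \<cdot>\<^sub>v v = a \<cdot>\<^sub>v w"
  shows "v = w"
  using arg_cong[OF assms(2), of "\<lambda>u. inverse a \<cdot>\<^sub>v u"] assms(1) by (simp add: smult_smult_assoc)

lemma add_diff_pair_eq_iff:
  fixes a b a' b' :: "'a :: field_char_0"
  shows "a + b = a' + b' \<and> a - b = a' - b' \<longleftrightarrow> a = a' \<and> b = b'"
proof
  assume eqs: "a + b = a' + b' \<and> a - b = a' - b'"
  then have "(a + b) + (a - b) = (a' + b') + (a' - b')" by simp
  then have "2 * a = 2 * a'" by (simp add: algebra_simps mult_2)
  then show "a = a' \<and> b = b'" using eqs by simp
qed simp

lemma doubleton_add_diff_eq: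
  fixes x y x' y' :: "'a :: field_char_0 vec"
  assumes "x \<in> carrier_vec n" "y \<in> carrier_vec n" "x' \<in> carrier_vec n" "y' \<in> carrier_vec n"
    and "{x + y, x - y} = {x' + y', x' - y'}"
  shows "x' = x \<and> (\<exists>\<sigma>. (\<sigma> = 1 \<or> \<sigma> = -1) \<and> y' = \<sigma> \<cdot>\<^sub>v y)"
proof -
  obtain \<sigma> :: 'a where \<sigma>: "\<sigma> = 1 \<or> \<sigma> = -1"
    and entries: "\<And>i. i < n \<Longrightarrow> x $ i + y $ i = x' $ i + \<sigma> * y' $ i \<and> x $ i - y $ i = x' $ i - \<sigma> * y' $ i"
  proof -
    from assms(5) consider "x + y = x' + y'" "x - y = x' - y'" | "x + y = x' - y'" "x - y = x' + y'"
      by (auto simp: doubleton_eq_iff)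
    then show ?thesis
    proof cases
      case 1
      have entries: "x $ i + y $ i = x' $ i + 1 * y' $ i \<and> x $ i - y $ i = x' $ i - 1 * y' $ i" if "i < n" for i
        using arg_cong[OF 1(1), of "\<lambda>v. v $ i"] arg_cong[OF 1(2), of "\<lambda>v. v $ i"] assms(1-4) that
        by simp
      show ?thesis by (rule that[of 1]) (simp_all add: entries)
    next
      case 2
      have entries: "x $ i + y $ i = x' $ i + -1 * y' $ i \<and> x $ i - y $ i = x' $ i - -1 * y' $ i" if "i < n" for i
        using arg_cong[OF 2(1), of "\<lambda>v. v $ i"] arg_cong[OF 2(2), of "\<lambda>v. v $ i"] assms(1-4) that
        by simp
      show ?thesis by (rule that[of "-1"]) (simp_all add: entries)
    qed
  qed
  have "x' $ i = x $ i \<and> y' $ i = \<sigma> * y $ i" if "i < n" for i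
    using entries[OF that] \<sigma> unfolding add_diff_pair_eq_iff by auto
  then show ?thesis
    using assms(1-4) \<sigma> by (auto intro!: eq_vecI)
qed

lemma det_multcol:
  fixes A :: "'a :: comm_ring_1 mat"
  assumes "A \<in> carrier_mat n n" and "k < n"
  shows "det (multcol k a A) = a * det A"
  using assms by (simp add: multcol_mat det_mult[of _ n] det_multrow_mat)

lemma rho_wbasis:
  assumes "k \<le> l1 - l2"
  shows "rho l1 l2 M (wbasis l1 l2 k) = vec (l1 - l2 + 1) (\<lambda>l. det M ^ l2 *
     coeff ([:M $$ (0,0), M $$ (1,0):] ^ (l1 - l2 - k) * [:M $$ (0,1), M $$ (1,1):] ^ k) l)"
proof -
  have "(\<Sum>k'\<le>l1 - l2. unit_vec (l1 - l2 + 1) k $ k' * f k') = f k" for f :: "nat \<Rightarrow> complex"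
  proof -
    have "(\<Sum>k'\<le>l1 - l2. unit_vec (l1 - l2 + 1) k $ k' * f k') = (\<Sum>k'\<le>l1 - l2. if k' = k then f k else 0)"
      using assms by (intro sum.cong) auto
    then show ?thesis using assms by simp
  qed
  then show ?thesis by (simp add: rho_def wbasis_def)
qed

lemma rho_wbasis_eq_if_columns_related:
  fixes M M' :: "complex mat"
  assumes M: "M \<in> carrier_mat 2 2" and M': "M' \<in> carrier_mat 2 2"
    and l: "l2 \<le> l1" and k: "k \<le> l1 - l2"
    and col0: "k < l1 \<Longrightarrow> col M' 0 = col M 0"
    and col1: "0 < l2 + k \<Longrightarrow> col M' 1 = \<sigma> \<cdot>\<^sub>v col M 1"
    and \<sigma>: "\<sigma> ^ (l2 + k) = 1"
  shows "rho l1 l2 M' (wbasis l1 l2 k) = rho l1 l2 M (wbasis l1 l2 k)"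
proof -
  define p0 where "p0 N = [:N $$ (0,0), N $$ (1,0):]" for N :: "complex mat"
  define p1 where "p1 N = [:N $$ (0,1), N $$ (1,1):]" for N :: "complex mat"
  have entry0: "M' $$ (r,0) = M $$ (r,0)" if "k < l1" "r < 2" for r
    using arg_cong[OF col0[OF that(1)], of "\<lambda>v. v $ r"] M M' that(2) by simp
  have entry1: "M' $$ (r,1) = \<sigma> * M $$ (r,1)" if "0 < l2 + k" "r < 2" for r
    using arg_cong[OF col1[OF that(1)], of "\<lambda>v. v $ r"] M M' that(2) by simp
  have det: "det M' ^ l2 = \<sigma> ^ l2 * det M ^ l2"
  proof (cases "l2 = 0")
    case False
    then have "M' = multcol 1 \<sigma> M"
      using k l M M' entry0 entry1 by (intro eq_matI) (auto simp: less_2_cases_iff)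
    then show ?thesis using M by (simp add: det_multcol power_mult_distrib)
  qed simp
  have pow0: "p0 M' ^ (l1 - l2 - k) = p0 M ^ (l1 - l2 - k)"
  proof (cases "l1 - l2 - k = 0")
    case False
    then show ?thesis using entry0[of 0] entry0[of 1] by (simp add: p0_def)
  qed simp
  have pow1: "p1 M' ^ k = smult (\<sigma> ^ k) (p1 M ^ k)"
  proof (cases "k = 0")
    case False
    then have "p1 M' = smult \<sigma> (p1 M)" using entry1[of 0] entry1[of 1] by (simp add: p1_def)
    then show ?thesis by (simp add: smult_power)
  qed simp
  have "det M' ^ l2 * coeff (p0 M' ^ (l1 - l2 - k) * p1 M' ^ k) l
      = \<sigma> ^ (l2 + k) * (det M ^ l2 * coeff (p0 M ^ (l1 - l2 - k) * p1 M ^ k) l)" for l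
    unfolding det pow0 pow1 by (simp add: power_add)
  then show ?thesis
    using \<sigma> by (simp add: rho_wbasis[OF k] p0_def p1_def)
qed

lemma omega_carrier [simp]: "omega n \<in> carrier_mat 2 n"
  by (simp add: omega_def)

lemma epsilon_carrier [simp]: "epsilon n \<in> carrier_mat n 2"
  by (simp add: epsilon_def)

definition frame :: "nat \<Rightarrow> complex mat \<Rightarrow> real mat \<Rightarrow> complex mat" where
  "frame n \<gamma> Y = omega n * (\<gamma> * map_mat complex_of_real Y) * epsilon n"

lemma frame_carrier [simp]: "frame n \<gamma> Y \<in> carrier_mat 2 2"
  using omega_carrier[of n] epsilon_carrier[of n] unfolding frame_def carrier_mat_def by simp

lemma col_frame:
  assumes \<gamma>: "\<gamma> \<in> carrier_mat n n" and Y: "Y \<in> carrier_mat n n" and c: "c < 2" and n: "2 \<le> n"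
  shows "col (frame n \<gamma> Y) c = (omega n * \<gamma>) *\<^sub>v map_vec complex_of_real (col Y c)"
proof -
  have YC: "map_mat complex_of_real Y \<in> carrier_mat n n"
    using Y by simp
  have \<omega>\<gamma>: "omega n * \<gamma> \<in> carrier_mat 2 n" and Y\<epsilon>: "map_mat complex_of_real Y * epsilon n \<in> carrier_mat n 2"
    using mult_carrier_mat[OF omega_carrier \<gamma>] mult_carrier_mat[OF YC epsilon_carrier] by auto
  have "frame n \<gamma> Y = omega n * (\<gamma> * (map_mat complex_of_real Y * epsilon n))"
    using assoc_mult_mat[OF omega_carrier mult_carrier_mat[OF \<gamma> YC] epsilon_carrier]
      assoc_mult_mat[OF \<gamma> YC epsilon_carrier] by (simp add: frame_def)
  also have "\<dots> = (omega n * \<gamma>) * (map_mat complex_of_real Y * epsilon n)"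
    using assoc_mult_mat[OF omega_carrier \<gamma> Y\<epsilon>] by simp
  finally have "frame n \<gamma> Y = (omega n * \<gamma>) * (map_mat complex_of_real Y * epsilon n)" .
  then have "col (frame n \<gamma> Y) c = (omega n * \<gamma>) *\<^sub>v col (map_mat complex_of_real Y * epsilon n) c"
    using col_mult2[OF \<omega>\<gamma> Y\<epsilon> c] by simp
  also have "col (map_mat complex_of_real Y * epsilon n) c = map_mat complex_of_real Y *\<^sub>v unit_vec n c"
    using col_mult2[of _ n n "epsilon n" 2 c] Y c n by (auto simp: epsilon_def unit_vec_def)
  also have "\<dots> = map_vec complex_of_real (col Y c)"
    using Y c n by (simp add: mult_mat_vec_unit_vec[of _ n n])
  finally show ?thesis .
qed

lemma col_frame_scaled:
  assumes "\<gamma> \<in> carrier_mat n n" "A \<in> carrier_mat n n" "B \<in> carrier_mat n n" "c < 2" "2 \<le> n"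
    and "col B c = \<sigma> \<cdot>\<^sub>v col A c"
  shows "col (frame n \<gamma> B) c = complex_of_real \<sigma> \<cdot>\<^sub>v col (frame n \<gamma> A) c"
proof -
  have "omega n * \<gamma> \<in> carrier_mat 2 n" "map_vec complex_of_real (col A c) \<in> carrier_vec n"
    using mult_carrier_mat[OF omega_carrier assms(1)] assms(2,4) by auto
  then show ?thesis
    using assms by (simp add: col_frame of_real_hom.vec_hom_smult mult_mat_vec)
qed

lemma frame_right_translate:
  assumes "\<gamma> \<in> carrier_mat n n" and "g \<in> carrier_mat n n" and "Y \<in> carrier_mat n n"
  shows "frame n (\<gamma> * map_mat complex_of_real g) Y = frame n \<gamma> (g * Y)"
  using assms by (simp add: frame_def of_real_hom.mat_hom_mult assoc_mult_mat[of _ n n _ n _ n])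

lemma psi_eq_rho_frame:
  "psi n s (l1, l2) i j k J \<gamma>
     = complex_of_real (xi l1 l2 i j k J) \<cdot>\<^sub>v rho l1 l2 (frame n \<gamma> (s J)) (wbasis l1 l2 k)"
  by (simp add: psi_def piR_def Psi_def frame_def)

lemma orth_left_inverse:
  assumes "g \<in> orth n" and "x \<in> carrier_vec n"
  shows "transpose_mat g *\<^sub>v (g *\<^sub>v x) = x"
  using assms by (simp add: orth_def assoc_mult_mat_vec[symmetric, of _ n n _ n])

lemma orth_scalar_prod:
  assumes g: "g \<in> orth n" and x: "x \<in> carrier_vec n" and y: "y \<in> carrier_vec n"
  shows "(g *\<^sub>v x) \<bullet> (g *\<^sub>v y) = x \<bullet> y"
proof -
  have "g \<in> carrier_mat n n" using g by (simp add: orth_def)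
  then have "(transpose_mat g *\<^sub>v (g *\<^sub>v x)) \<bullet> y = (g *\<^sub>v x) \<bullet> (g *\<^sub>v y)"
    using x y by (intro transpose_vec_mult_scalar) auto
  then show ?thesis using orth_left_inverse[OF g x] by simp
qed

lemma orth_inj_on: "g \<in> orth n \<Longrightarrow> inj_on ((*\<^sub>v) g) (carrier_vec n)"
  by (metis inj_onI orth_left_inverse)

lemma act_mult:
  assumes "g \<in> carrier_mat n n" and "h \<in> carrier_mat n n" and "R \<subseteq> carrier_vec n"
  shows "act (g * h) R = act g (act h R)"
  unfolding act_def image_image using assms by (intro image_cong) (auto simp: assoc_mult_mat_vec[of _ n n _ n])

lemma I2_carrier: "J \<in> I2 n \<theta> \<Longrightarrow> J \<subseteq> carrier_vec n"
  unfolding I2_def sphere_n_def carrier_vec_def by blast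

lemma card_act_orth:
  assumes "g \<in> orth n" and "J \<subseteq> carrier_vec n"
  shows "card (act g J) = card J"
  unfolding act_def using assms by (intro card_image inj_on_subset[OF orth_inj_on]) auto

lemma act_orth_pairs_iff:
  assumes g: "g \<in> orth n" and J: "J \<subseteq> carrier_vec n"
  shows "(\<exists>x\<in>act g J. \<exists>y\<in>act g J. P (x = y) (x \<bullet> y)) \<longleftrightarrow> (\<exists>x\<in>J. \<exists>y\<in>J. P (x = y) (x \<bullet> y))"
proof -
  have "g *\<^sub>v x = g *\<^sub>v y \<longleftrightarrow> x = y" and "(g *\<^sub>v x) \<bullet> (g *\<^sub>v y) = x \<bullet> y" if "x \<in> J" "y \<in> J" for x y
    using that subsetD[OF J] inj_onD[OF orth_inj_on[OF g]] orth_scalar_prod[OF g] by metis+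
  then show ?thesis
    unfolding act_def by auto
qed

lemma ipJ_act_orth:
  assumes "g \<in> orth n" and "J \<subseteq> carrier_vec n"
  shows "ipJ (act g J) = ipJ J"
  unfolding ipJ_def card_act_orth[OF assms]
  using act_orth_pairs_iff[OF assms, of "\<lambda>e p. (2 \<le> card J \<longrightarrow> \<not> e) \<and> _ = p"] by simp

lemma act_orth_I2:
  assumes g: "g \<in> orth n" and J: "J \<in> I2 n \<theta>"
  shows "act g J \<in> I2 n \<theta>"
proof -
  note J_carrier = I2_carrier[OF J]
  have "g \<in> carrier_mat n n" using g by (simp add: orth_def)
  then have "act g J \<subseteq> sphere_n n"
    using J orth_scalar_prod[OF g] J_carrier by (fastforce simp: act_def I2_def sphere_n_def)
  moreover have "\<not> (\<exists>x\<in>act g J. \<exists>y\<in>act g J. \<not> x = y \<and> cos \<theta> < x \<bullet> y)"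
    using J act_orth_pairs_iff[OF g J_carrier, of "\<lambda>e p. \<not> e \<and> cos \<theta> < p"] by (auto simp: I2_def)
  ultimately show ?thesis
    using J card_act_orth[OF g J_carrier] by (auto simp: I2_def act_def)
qed

lemma xi_act_orth:
  assumes "g \<in> orth n" and "J \<subseteq> carrier_vec n"
  shows "xi l1 l2 i j k (act g J) = xi l1 l2 i j k J"
  using assms by (simp add: xi_def pJ_def q1_def q2_def card_act_orth ipJ_act_orth)

lemma repr_act_orth:
  assumes "g \<in> orth n" and "J \<subseteq> carrier_vec n"
  shows "repr n (act g J) = repr n J"
proof -
  have "act g J = {} \<longleftrightarrow> J = {}" by (simp add: act_def)
  moreover have "q1 (act g J) = q1 J" and "q2 (act g J) = q2 J"
    using assms by (simp_all add: q1_def q2_def ipJ_act_orth)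
  ultimately show ?thesis
    unfolding repr_def by (simp only:)
qed

lemma repr_nonempty:
  assumes "J \<noteq> {}" and "2 \<le> n"
  shows "repr n J = {q1 J / 2 \<cdot>\<^sub>v unit_vec n 0 + q2 J / 2 \<cdot>\<^sub>v unit_vec n 1,
                     q1 J / 2 \<cdot>\<^sub>v unit_vec n 0 - q2 J / 2 \<cdot>\<^sub>v unit_vec n 1}"
proof -
  have "vec n (\<lambda>i. if i = 0 then a else if i = 1 then b else 0) = a \<cdot>\<^sub>v unit_vec n 0 + b \<cdot>\<^sub>v unit_vec n 1"
    and "vec n (\<lambda>i. if i = 0 then a else if i = 1 then - b else 0) = a \<cdot>\<^sub>v unit_vec n 0 - b \<cdot>\<^sub>v unit_vec n 1"
    for a b :: real
    using assms(2) by (auto intro!: eq_vecI)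
  then show ?thesis
    using assms(1) by (simp add: repr_def)
qed

lemma columns_related_if_act_eq:
  fixes A B :: "real mat"
  assumes A: "A \<in> carrier_mat n n" and B: "B \<in> carrier_mat n n" and n: "2 \<le> n"
    and AB: "act A {a \<cdot>\<^sub>v unit_vec n 0 + b \<cdot>\<^sub>v unit_vec n 1, a \<cdot>\<^sub>v unit_vec n 0 - b \<cdot>\<^sub>v unit_vec n 1}
           = act B {a \<cdot>\<^sub>v unit_vec n 0 + b \<cdot>\<^sub>v unit_vec n 1, a \<cdot>\<^sub>v unit_vec n 0 - b \<cdot>\<^sub>v unit_vec n 1}"
  shows "\<exists>\<sigma>. (\<sigma> = 1 \<or> \<sigma> = -1) \<and> (a \<noteq> 0 \<longrightarrow> col B 0 = col A 0) \<and> (b \<noteq> 0 \<longrightarrow> col B 1 = \<sigma> \<cdot>\<^sub>v col A 1)"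
proof -
  have image: "act M {a \<cdot>\<^sub>v unit_vec n 0 + b \<cdot>\<^sub>v unit_vec n 1, a \<cdot>\<^sub>v unit_vec n 0 - b \<cdot>\<^sub>v unit_vec n 1}
      = {a \<cdot>\<^sub>v col M 0 + b \<cdot>\<^sub>v col M 1, a \<cdot>\<^sub>v col M 0 - b \<cdot>\<^sub>v col M 1}" if "M \<in> carrier_mat n n" for M
    using that n by (simp add: act_def mult_add_distrib_mat_vec[of _ n n] mult_minus_distrib_mat_vec[of _ n n]
        mult_mat_vec[of _ n n] mult_mat_vec_unit_vec)
  have "{a \<cdot>\<^sub>v col A 0 + b \<cdot>\<^sub>v col A 1, a \<cdot>\<^sub>v col A 0 - b \<cdot>\<^sub>v col A 1}
      = {a \<cdot>\<^sub>v col B 0 + b \<cdot>\<^sub>v col B 1, a \<cdot>\<^sub>v col B 0 - b \<cdot>\<^sub>v col B 1}"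
    using AB unfolding image[OF A] image[OF B] .
  moreover have "a \<cdot>\<^sub>v col M 0 \<in> carrier_vec n" "b \<cdot>\<^sub>v col M 1 \<in> carrier_vec n" if "M \<in> carrier_mat n n" for M
    using that n by auto
  ultimately obtain \<sigma> where \<sigma>: "\<sigma> = 1 \<or> \<sigma> = -1" and col0: "a \<cdot>\<^sub>v col B 0 = a \<cdot>\<^sub>v col A 0"
    and col1: "b \<cdot>\<^sub>v col B 1 = \<sigma> \<cdot>\<^sub>v (b \<cdot>\<^sub>v col A 1)"
    using doubleton_add_diff_eq A B by meson
  have "\<sigma> \<cdot>\<^sub>v (b \<cdot>\<^sub>v col A 1) = b \<cdot>\<^sub>v (\<sigma> \<cdot>\<^sub>v col A 1)"
    by (simp add: smult_smult_assoc mult.commute)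
  then show ?thesis
    using \<sigma> col0 col1 smult_vec_left_cancel[of a] smult_vec_left_cancel[of b] by metis
qed

lemma admissibleD:
  assumes "admissible (l1, l2) i j k"
  shows "k \<le> l1 - l2" and "even (l2 + k)"
  using assms by (auto simp: admissible_def)

lemma ipJ_singleton: "x \<in> sphere_n n \<Longrightarrow> ipJ {x} = 1"
  by (simp add: ipJ_def sphere_n_def)

lemma xi_nonzero_imp_q_nonzero:
  assumes adm: "admissible (l1, l2) i j k" and l: "l2 \<le> l1" and J: "J \<in> I2 n \<theta>"
    and xi: "xi l1 l2 i j k J \<noteq> 0"
  shows "k < l1 \<longrightarrow> J \<noteq> {} \<and> q1 J \<noteq> 0" and "0 < l2 + k \<longrightarrow> J \<noteq> {} \<and> q2 J \<noteq> 0"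
proof -
  have i: "i = card J" and card: "card J \<le> 2"
    using xi J by (auto simp: xi_def I2_def split: if_splits)
  consider "card J = 0" | "card J = 1" | "card J = 2"
    using card by linarith
  then have "(k < l1 \<longrightarrow> J \<noteq> {} \<and> q1 J \<noteq> 0) \<and> (0 < l2 + k \<longrightarrow> J \<noteq> {} \<and> q2 J \<noteq> 0)"
  proof cases
    case 1
    then show ?thesis using adm i by (simp add: admissible_def)
  next
    case 2
    then obtain x where "J = {x}" "x \<in> sphere_n n"
      using J by (auto simp: card_1_singleton_iff I2_def)
    then show ?thesis using adm i by (simp add: admissible_def q1_def ipJ_singleton)
  next
    case 3
    then have "q1 J ^ (l1 - k) \<noteq> 0" and "q2 J ^ (l2 + k) \<noteq> 0"
      using xi i l by (simp_all add: xi_def)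
    then show ?thesis using 3 by auto
  qed
  then show "k < l1 \<longrightarrow> J \<noteq> {} \<and> q1 J \<noteq> 0" and "0 < l2 + k \<longrightarrow> J \<noteq> {} \<and> q2 J \<noteq> 0"
    by simp_all
qed

lemma section_act_repr_eq:
  assumes s: "is_section n \<theta> s" and g: "g \<in> orth n" and J: "J \<in> I2 n \<theta>"
  shows "act (g * s J) (repr n J) = act (s (act g J)) (repr n J)"
proof -
  have "s J \<in> orth n" "act (s J) (repr n J) = J" "act (s (act g J)) (repr n J) = act g J"
    using s J act_orth_I2[OF g J] repr_act_orth[OF g I2_carrier[OF J]] by (auto simp: is_section_def)
  moreover have "repr n J \<subseteq> carrier_vec n"
    by (auto simp: repr_def)
  ultimately show ?thesis
    using g act_mult[of g n "s J" "repr n J"] by (simp add: orth_def)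
qed

lemma rho_frame_eq_if_act_repr_eq:
  assumes \<gamma>: "\<gamma> \<in> carrier_mat n n" and A: "A \<in> carrier_mat n n" and B: "B \<in> carrier_mat n n"
    and n: "2 \<le> n" and AB: "act A (repr n J) = act B (repr n J)" and J: "J \<in> I2 n \<theta>"
    and l: "l2 \<le> l1" and adm: "admissible (l1, l2) i j k" and xi: "xi l1 l2 i j k J \<noteq> 0"
  shows "rho l1 l2 (frame n \<gamma> B) (wbasis l1 l2 k) = rho l1 l2 (frame n \<gamma> A) (wbasis l1 l2 k)"
proof -
  note q_nonzero = xi_nonzero_imp_q_nonzero[OF adm l J xi]
  obtain \<sigma> :: real where \<sigma>: "\<sigma> = 1 \<or> \<sigma> = -1"
    and col0: "k < l1 \<Longrightarrow> col B 0 = col A 0" and col1: "0 < l2 + k \<Longrightarrow> col B 1 = \<sigma> \<cdot>\<^sub>v col A 1"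
  proof (cases "J = {}")
    case True
    then show ?thesis using q_nonzero by (intro that[of 1]) auto
  next
    case False
    then show ?thesis
      using columns_related_if_act_eq[OF A B n AB[unfolded repr_nonempty[OF False n]]] q_nonzero that
      by force
  qed
  have "complex_of_real \<sigma> ^ (l2 + k) = 1"
    using \<sigma> admissibleD(2)[OF adm] by auto
  then show ?thesis
    using admissibleD(1)[OF adm] l col0 col1 col_frame_scaled[OF \<gamma> A B _ n, of 0 1]
      col_frame_scaled[OF \<gamma> A B _ n, of 1 \<sigma>]
    by (intro rho_wbasis_eq_if_columns_related) auto
qed

theorem mainTheorem5:
  fixes n :: nat and \<theta> :: real and l1 l2 i j k :: nat
    and s :: "real vec set \<Rightarrow> real mat"
  assumes "n \<ge> 4"
    and "l2 \<le> l1"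
    and "admissible (l1, l2) i j k"
    and "is_section n \<theta> s"
  shows "\<forall>g \<in> orth n. \<forall>J \<in> I2 n \<theta>. \<forall>\<gamma> \<in> orthC n.
           psi n s (l1, l2) i j k (act g J) \<gamma> = piR g (psi n s (l1, l2) i j k J) \<gamma>"
proof (intro ballI)
  fix g J \<gamma> assume g: "g \<in> orth n" and J: "J \<in> I2 n \<theta>" and \<gamma>: "\<gamma> \<in> orthC n"
  define A where "A = g * s J"
  define B where "B = s (act g J)"
  have carriers: "\<gamma> \<in> carrier_mat n n" "g \<in> carrier_mat n n" "A \<in> carrier_mat n n" "B \<in> carrier_mat n n"
    using \<gamma> g J act_orth_I2[OF g J] assms(4)
    by (auto simp: orthC_def orth_def is_section_def A_def B_def)
  have lhs: "psi n s (l1, l2) i j k (act g J) \<gamma>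
      = complex_of_real (xi l1 l2 i j k J) \<cdot>\<^sub>v rho l1 l2 (frame n \<gamma> B) (wbasis l1 l2 k)"
    by (simp add: psi_eq_rho_frame B_def xi_act_orth[OF g I2_carrier[OF J]])
  have rhs: "piR g (psi n s (l1, l2) i j k J) \<gamma>
      = complex_of_real (xi l1 l2 i j k J) \<cdot>\<^sub>v rho l1 l2 (frame n \<gamma> A) (wbasis l1 l2 k)"
    using J assms(4) carriers(1,2)
    by (simp add: piR_def psi_eq_rho_frame frame_right_translate A_def is_section_def orth_def)
  show "psi n s (l1, l2) i j k (act g J) \<gamma> = piR g (psi n s (l1, l2) i j k J) \<gamma>"
  proof (cases "xi l1 l2 i j k J = 0")
    case True
    then show ?thesis unfolding lhs rhs by (auto simp: rho_def)
  next
    case False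
    have "2 \<le> n" using assms(1) by simp
    then show ?thesis unfolding lhs rhs
      using rho_frame_eq_if_act_repr_eq[OF carriers(1,3,4) _ _ J assms(2,3) False]
        section_act_repr_eq[OF assms(4) g J]
      by (simp add: A_def B_def)
  qed
qed

end
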